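(* Let $f\in\mathbb C[x_1,\dots,x_n]$ be nonzero, $\ell\in\mathbb N$ and $\omega\in\mathbb R^n\setminus\{0\}$, and let $\tau=\tau_\omega$. Then $$\mathrm{in}_{(-\omega,\omega)}\Big(\mathrm{Ann}\big(\tfrac1{f^\ell}\big)\Big)\subseteq\mathrm{Ann}\Big(\tfrac1{f_\tau^\ell}\Big).$$
   Context: $D_n$ is the $n$-th Weyl algebra ($\partial_ix_j=x_j\partial_i+\delta_{ij}$); ideals are left ideals. For $\omega\in\mathbb R^n$, the $(-\omega,\omega)$-weight of $x^\alpha\partial^\beta$ is $-\langle\omega,\alpha\rangle+\langle\omega,\beta\rangle$; $\mathrm{in}_{(-\omega,\omega)}(P)$ is the sum of the terms of maximal weight of the normally ordered expression of $P$, and $\mathrm{in}_{(-\omega,\omega)}(I)$ is the left ideal generated by the $\mathrm{in}_{(-\omega,\omega)}(P)$, $P\in I\setminus\{0\}$. For a nonzero rational function $g$, $\mathrm{Ann}(g)=\{P\in D_n:P\bullet g=0\}$ with $x_i\bullet g=x_ig$, $\partial_i\bullet g=\partial g/\partial x_i$. For $f=\sum_\gamma c_\gamma x^\gamma$: $\mathrm{Supp}(f)=\{\gamma:c_\gamma\ne0\}$, $\Gamma(f)$ its convex hull, $\mathrm{ord}_f(\omega)=\min\{\langle\gamma,\omega\rangle:\gamma\in\Gamma(f)\}$, $\tau_\omega=\{u\in\Gamma(f):\langle u,\omega\rangle=\mathrm{ord}_f(\omega)\}$, and for a face $\tau$, $f_\tau=\sum_{\gamma\in\tau\cap\mathrm{Supp}(f)}c_\gamma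 x^\gamma$. $\mathbb N=\{0,1,2,\dots\}$. *)

theory Defs
  imports "HOL-Analysis.Analysis"
begin

text \<open>Multi-indices are functions nat => nat; only indices i < n are relevant.
 A polynomial in C[x_0..x_(n-1)] is its coefficient function (nat => nat) => complex
 with finite support inside multi-indices supported in {0..<n}.
 An element of the Weyl algebra D_n is its normally ordered coefficient function
 (alpha, beta) |-> c_(alpha,beta) for sum c x^alpha d^beta.\<close>

type_synonym mindex = "nat \<Rightarrow> nat"
type_synonym cpoly = "mindex \<Rightarrow> complex"
type_synonym weyl = "mindex \<times> mindex \<Rightarrow> complex"

definition is_poly :: "nat \<Rightarrow> cpoly \<Rightarrow> bool" where
  "is_poly n f \<longleftrightarrow> finite {g. f g \<noteq> 0} \<and> (\<forall>g. f g \<noteq> 0 \<longrightarrow> (\<forall>i\<ge>n. g i = 0))"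

definition is_weyl :: "nat \<Rightarrow> weyl \<Rightarrow> bool" where
  "is_weyl n P \<longleftrightarrow> finite {m. P m \<noteq> 0} \<and>
     (\<forall>a b. P (a, b) \<noteq> 0 \<longrightarrow> (\<forall>i\<ge>n. a i = 0 \<and> b i = 0))"

definition mono :: "nat \<Rightarrow> mindex \<Rightarrow> (nat \<Rightarrow> complex) \<Rightarrow> complex" where
  "mono n a z = (\<Prod>i<n. z i ^ a i)"

definition peval :: "nat \<Rightarrow> cpoly \<Rightarrow> (nat \<Rightarrow> complex) \<Rightarrow> complex" where
  "peval n f z = (\<Sum>g\<in>{g. f g \<noteq> 0}. f g * mono n g z)"

definition partial :: "nat \<Rightarrow> ((nat \<Rightarrow> complex) \<Rightarrow> complex) \<Rightarrow> (nat \<Rightarrow> complex) \<Rightarrow> complex" where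
  "partial i g z = deriv (\<lambda>t. g (z(i := t))) (z i)"

fun dpow :: "nat \<Rightarrow> mindex \<Rightarrow> ((nat \<Rightarrow> complex) \<Rightarrow> complex) \<Rightarrow> (nat \<Rightarrow> complex) \<Rightarrow> complex" where
  "dpow 0 b g = g"
| "dpow (Suc k) b g = (partial k ^^ b k) (dpow k b g)"

definition act :: "nat \<Rightarrow> weyl \<Rightarrow> ((nat \<Rightarrow> complex) \<Rightarrow> complex) \<Rightarrow> (nat \<Rightarrow> complex) \<Rightarrow> complex" where
  "act n P g z = (\<Sum>m\<in>{m. P m \<noteq> 0}. P m * mono n (fst m) z * dpow n (snd m) g z)"

text \<open>Ann(1/h^l): operators P with P . (1/h^l) = 0 as a rational function, i.e.
  vanishing wherever h is nonzero.\<close>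
definition Ann_inv_pow :: "nat \<Rightarrow> cpoly \<Rightarrow> nat \<Rightarrow> weyl set" where
  "Ann_inv_pow n h l = {P. is_weyl n P \<and>
     (\<forall>z. peval n h z \<noteq> 0 \<longrightarrow> act n P (\<lambda>z. inverse (peval n h z ^ l)) z = 0)}"

text \<open>Left multiplication by x_i and by d_i on normally ordered expressions
  (d_i x^a d^b = x^a d^(b+e_i) + a_i x^(a-e_i) d^b).\<close>
definition lmul_x :: "nat \<Rightarrow> weyl \<Rightarrow> weyl" where
  "lmul_x i P = (\<lambda>(a, b). if a i \<ge> 1 then P (a(i := a i - 1), b) else 0)"

definition lmul_d :: "nat \<Rightarrow> weyl \<Rightarrow> weyl" where
  "lmul_d i P = (\<lambda>(a, b). (if b i \<ge> 1 then P (a, b(i := b i - 1)) else 0)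
                         + of_nat (a i + 1) * P (a(i := a i + 1), b))"

text \<open>Left ideal of D_n generated by S (D_n is generated as a C-algebra by the x_i, d_i).\<close>
inductive_set left_ideal :: "nat \<Rightarrow> weyl set \<Rightarrow> weyl set" for n S where
  gen: "P \<in> S \<Longrightarrow> P \<in> left_ideal n S"
| zero: "(\<lambda>_. 0) \<in> left_ideal n S"
| add: "P \<in> left_ideal n S \<Longrightarrow> Q \<in> left_ideal n S \<Longrightarrow> (\<lambda>m. P m + Q m) \<in> left_ideal n S"
| smul: "P \<in> left_ideal n S \<Longrightarrow> (\<lambda>m. c * P m) \<in> left_ideal n S"
| lx: "P \<in> left_ideal n S \<Longrightarrow> i < n \<Longrightarrow> lmul_x i P \<in> left_ideal n S"
| ld: "P \<in> left_ideal n S \<Longrightarrow> i < n \<Longrightarrow> lmul_d i P \<in> left_ideal n S"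

definition wt :: "nat \<Rightarrow> (nat \<Rightarrow> real) \<Rightarrow> mindex \<times> mindex \<Rightarrow> real" where
  "wt n w m = (\<Sum>i<n. w i * (real (snd m i) - real (fst m i)))"

definition initial :: "nat \<Rightarrow> (nat \<Rightarrow> real) \<Rightarrow> weyl \<Rightarrow> weyl" where
  "initial n w P = (\<lambda>m. if P m \<noteq> 0 \<and> wt n w m = Max (wt n w ` {m. P m \<noteq> 0}) then P m else 0)"

definition initial_ideal :: "nat \<Rightarrow> (nat \<Rightarrow> real) \<Rightarrow> weyl set \<Rightarrow> weyl set" where
  "initial_ideal n w I = left_ideal n {initial n w P | P. P \<in> I \<and> P \<noteq> (\<lambda>_. 0)}"

definition emb :: "mindex \<Rightarrow> nat \<Rightarrow> real" where
  "emb g = (\<lambda>i. real (g i))"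

definition ipr :: "nat \<Rightarrow> (nat \<Rightarrow> real) \<Rightarrow> (nat \<Rightarrow> real) \<Rightarrow> real" where
  "ipr n u w = (\<Sum>i<n. u i * w i)"

definition Newton :: "cpoly \<Rightarrow> (nat \<Rightarrow> real) set" where
  "Newton f = {u. \<exists>c :: mindex \<Rightarrow> real. (\<forall>g\<in>{g. f g \<noteq> 0}. c g \<ge> 0) \<and>
      (\<Sum>g\<in>{g. f g \<noteq> 0}. c g) = 1 \<and> u = (\<lambda>i. \<Sum>g\<in>{g. f g \<noteq> 0}. c g * emb g i)}"

definition ordf :: "nat \<Rightarrow> cpoly \<Rightarrow> (nat \<Rightarrow> real) \<Rightarrow> real" where
  "ordf n f w = Inf ((\<lambda>u. ipr n u w) ` Newton f)"

definition face :: "nat \<Rightarrow> cpoly \<Rightarrow> (nat \<Rightarrow> real) \<Rightarrow> (nat \<Rightarrow> real) set" where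
  "face n f w = {u \<in> Newton f. ipr n u w = ordf n f w}"

definition face_poly :: "cpoly \<Rightarrow> (nat \<Rightarrow> real) set \<Rightarrow> cpoly" where
  "face_poly f T = (\<lambda>g. if emb g \<in> T then f g else 0)"

end

theory Submission
  imports Defs
begin

text \<open>First, \<open>Ann(1/g^l)\<close> is a left ideal for every polynomial \<open>g\<close>: closure
  under \<open>d_i\<close> holds because \<open>(d_i P) \<bullet> h\<close> is the derivative of \<open>P \<bullet> h\<close> (Leibniz rule), and
  \<open>P \<bullet> (1/g^l)\<close> vanishes on the open set \<open>{g \<noteq> 0}\<close>. Second, if \<open>P \<in> Ann(1/f^l)\<close> then \<open>in(P)\<close>
  annihilates \<open>1/f_tau^l\<close>, so the generators of the initial ideal lie in \<open>Ann(1/f_tau^l)\<close>.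
  Substitute \<open>z_i \<mapsto> t^(w_i) z_i\<close> and let \<open>t \<rightarrow> 0+\<close>: then \<open>f = t^(ord_f(w)) (f_tau + o(1))\<close>,
  \<open>d^b(1/f^l) = t^(-l ord_f(w) - <b,w>) (d^b(1/f_tau^l) + o(1))\<close> and \<open>x^a = t^(<a,w>) x^a\<close>, so
  a term \<open>x^a d^b\<close> of \<open>P\<close> contributes to \<open>P \<bullet> (1/f^l) = 0\<close> with order \<open>t^(-l ord_f(w) - wt(a,b))\<close>.
  Multiplying by \<open>t^(l ord_f(w) + M)\<close>, with \<open>M\<close> the maximal weight occurring in \<open>P\<close>, the limit is
  \<open>in(P) \<bullet> (1/f_tau^l) = 0\<close>.

  To differentiate \<open>d^b(1/f^l)\<close>, to commute partial derivatives and to follow the scaling, we write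
  \<open>d^b(1/f^l) = E / f^(l+|b|)\<close> with \<open>E\<close> an explicit polynomial expression in the coordinates and the
  partial derivatives of \<open>f\<close>.\<close>

section \<open>Partial derivatives of polynomials\<close>

definition falling_factorial :: "nat \<Rightarrow> nat \<Rightarrow> nat" where
  "falling_factorial k m = (\<Prod>j<m. k - j)"

lemma falling_factorial_Suc: "falling_factorial k (Suc m) = falling_factorial k m * (k - m)"
  by (simp add: falling_factorial_def)

lemma falling_factorial_eq_0: "k < m \<Longrightarrow> falling_factorial k m = 0"
  unfolding falling_factorial_def by (rule prod_zero) auto

text \<open>Termwise \<open>d^c x^g = (g)_c x^(g-c)\<close>; the falling factorial \<open>(g)_c\<close> vanishes exactly when
  the truncated subtraction \<open>g i - c i\<close> would give a wrong exponent.\<close>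
definition peval_deriv :: "nat \<Rightarrow> mindex \<Rightarrow> cpoly \<Rightarrow> (nat \<Rightarrow> complex) \<Rightarrow> complex" where
  "peval_deriv n c p z =
     (\<Sum>g\<in>{g. p g \<noteq> 0}. p g * (\<Prod>i<n. of_nat (falling_factorial (g i) (c i)) * z i ^ (g i - c i)))"

lemma peval_deriv_0: "peval_deriv n (\<lambda>_. 0) p = peval n p"
  by (rule ext) (simp add: peval_deriv_def peval_def mono_def falling_factorial_def)

lemma has_field_derivative_falling_power:
  "((\<lambda>t::complex. of_nat (falling_factorial k m) * t ^ (k - m)) has_field_derivative
     of_nat (falling_factorial k (Suc m)) * x ^ (k - Suc m)) (at x)"
proof -
  have "((\<lambda>t::complex. of_nat (falling_factorial k m) * t ^ (k - m)) has_field_derivative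
     of_nat (falling_factorial k m) * (of_nat (k - m) * x ^ (k - m - 1))) (at x)"
    by (intro derivative_eq_intros) auto
  then show ?thesis
    by (simp add: falling_factorial_Suc mult.assoc)
qed

lemma has_field_derivative_peval_deriv:
  assumes "i < n"
  shows "((\<lambda>t. peval_deriv n c p (z(i := t))) has_field_derivative
           peval_deriv n (c(i := c i + 1)) p z) (at (z i))"
proof -
  define F :: "mindex \<Rightarrow> mindex \<Rightarrow> (nat \<Rightarrow> complex) \<Rightarrow> nat \<Rightarrow> complex"
    where "F d g y j = of_nat (falling_factorial (g j) (d j)) * y j ^ (g j - d j)" for d g y j
  define R where "R g = (\<Prod>j\<in>{..<n}-{i}. F c g z j)" for g
  have split: "(\<Prod>j<n. F d g y j) = F d g y i * (\<Prod>j\<in>{..<n}-{i}. F d g y j)" for d g y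
    using assms by (subst prod.remove[of _ i]) auto
  have rest: "(\<Prod>j\<in>{..<n}-{i}. F d g y j) = R g"
    if "\<And>j. j \<noteq> i \<Longrightarrow> d j = c j \<and> y j = z j" for d g y
    unfolding R_def F_def by (rule prod.cong) (use that in auto)
  have "peval_deriv n c p (z(i := t)) =
      (\<Sum>g\<in>{g. p g \<noteq> 0}. p g * ((of_nat (falling_factorial (g i) (c i)) * t ^ (g i - c i)) * R g))" for t
    unfolding peval_deriv_def
    by (rule sum.cong[OF refl]) (simp add: split[unfolded F_def] rest[unfolded F_def])
  moreover have "peval_deriv n (c(i := c i + 1)) p z =
      (\<Sum>g\<in>{g. p g \<noteq> 0}. p g * ((of_nat (falling_factorial (g i) (Suc (c i))) * z i ^ (g i - Suc (c i))) * R g))"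
    unfolding peval_deriv_def
    by (rule sum.cong[OF refl]) (simp add: split[unfolded F_def] rest[unfolded F_def])
  ultimately show ?thesis
    by (simp only:) (intro DERIV_sum DERIV_cmult DERIV_cmult_right has_field_derivative_falling_power)
qed

text \<open>Derivatives of \<open>1/p^l\<close> are such expressions divided by powers of \<open>p\<close>. Keeping the
  expressions syntactic lets us differentiate them and read off their behaviour under weighted
  scaling.\<close>

datatype dexpr = Const complex | Coord nat | Deriv mindex | Add dexpr dexpr | Mul dexpr dexpr

fun deval :: "nat \<Rightarrow> cpoly \<Rightarrow> dexpr \<Rightarrow> (nat \<Rightarrow> complex) \<Rightarrow> complex" where
  "deval n p (Const c) z = c"
| "deval n p (Coord i) z = z i"
| "deval n p (Deriv c) z = peval_deriv n c p z"
| "deval n p (Add A B) z = deval n p A z + deval n p B z"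
| "deval n p (Mul A B) z = deval n p A z * deval n p B z"

fun ddiff :: "nat \<Rightarrow> dexpr \<Rightarrow> dexpr" where
  "ddiff i (Const c) = Const 0"
| "ddiff i (Coord j) = Const (if i = j then 1 else 0)"
| "ddiff i (Deriv c) = Deriv (c(i := c i + 1))"
| "ddiff i (Add A B) = Add (ddiff i A) (ddiff i B)"
| "ddiff i (Mul A B) = Add (Mul (ddiff i A) B) (Mul A (ddiff i B))"

lemma has_field_derivative_deval:
  assumes "i < n"
  shows "((\<lambda>t. deval n p E (z(i := t))) has_field_derivative deval n p (ddiff i E) z) (at (z i))"
proof (induction E)
  case (Coord j)
  then show ?case by (cases "i = j") simp_all
next
  case (Deriv c)
  show ?case using has_field_derivative_peval_deriv[OF assms, of c p z] by (simp only: deval.simps ddiff.simps)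
next
  case (Add A B)
  then show ?case by (simp add: DERIV_add)
next
  case (Mul A B)
  from DERIV_mult[OF Mul.IH] show ?case by (simp add: add.commute mult.commute)
qed simp

lemma deval_ddiff_commute: "deval n p (ddiff i (ddiff j E)) z = deval n p (ddiff j (ddiff i E)) z"
proof (induction E)
  case (Deriv c)
  then show ?case by (cases "i = j") (simp_all add: fun_upd_twist)
next
  case (Mul A B)
  then show ?case by (simp add: algebra_simps)
qed auto

lemma continuous_on_deval_line: "i < n \<Longrightarrow> continuous_on UNIV (\<lambda>t. deval n p E (z(i := t)))"
  using has_field_derivative_deval[of i n p E "z(i := _)"]
  by (intro continuous_at_imp_continuous_on ballI DERIV_isCont) simp

lemma open_line_peval_nonzero: "i < n \<Longrightarrow> open {t. peval n p (z(i := t)) \<noteq> 0}"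
  using continuous_on_deval_line[of i n p "Deriv (\<lambda>_. 0)" z]
  by (intro open_Collect_neq continuous_on_const) (simp add: peval_deriv_0)

section \<open>Derivatives of \<open>1/p^l\<close> as quotients\<close>

definition unit_index :: "nat \<Rightarrow> mindex" where
  "unit_index i = (\<lambda>_. 0)(i := 1)"

lemma unit_index_eq: "(\<lambda>_. 0)(i := Suc 0) = unit_index i"
  by (simp add: unit_index_def)

text \<open>Quotient rule: \<open>d_i (E / p^k) = (d_i E * p - k * E * d_i p) / p^(k+1)\<close>.\<close>
definition quot_diff :: "nat \<Rightarrow> nat \<Rightarrow> dexpr \<Rightarrow> dexpr" where
  "quot_diff i k E = Add (Mul (ddiff i E) (Deriv (\<lambda>_. 0)))
                          (Mul (Const (- of_nat k)) (Mul E (Deriv (unit_index i))))"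

definition quot_rep :: "nat \<Rightarrow> cpoly \<Rightarrow> ((nat \<Rightarrow> complex) \<Rightarrow> complex) \<Rightarrow> dexpr \<Rightarrow> nat \<Rightarrow> bool" where
  "quot_rep n p G E k \<longleftrightarrow>
     (\<forall>z. peval n p z \<noteq> 0 \<longrightarrow> G z = deval n p E z * inverse (peval n p z) ^ k)"

lemma has_field_derivative_quotient_power:
  fixes A F :: "complex \<Rightarrow> complex"
  assumes "(A has_field_derivative A') (at x)" "(F has_field_derivative F') (at x)" "F x \<noteq> 0"
  shows "((\<lambda>t. A t * inverse (F t) ^ k) has_field_derivative
           (A' * F x + (- of_nat k) * (A x * F')) * inverse (F x) ^ (k + 1)) (at x)"
proof -
  have "A' * inverse (F x) ^ k + of_nat k * (- (F' * inverse (F x ^ Suc (Suc 0))) * inverse (F x) ^ (k - 1)) * A x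
     = (A' * F x + (- of_nat k) * (A x * F')) * inverse (F x) ^ (k + 1)"
    using assms(3) by (cases k) (simp_all add: field_simps)
  with DERIV_mult[OF assms(1) DERIV_power[OF DERIV_inverse_fun[OF assms(2,3)], of k]]
  show ?thesis by simp
qed

lemma has_field_derivative_quot_rep:
  assumes "i < n" "quot_rep n p G E k" "peval n p z \<noteq> 0"
  shows "((\<lambda>t. G (z(i := t))) has_field_derivative
           deval n p (quot_diff i k E) z * inverse (peval n p z) ^ (k + 1)) (at (z i))"
proof (rule has_field_derivative_transform_within_open[OF _ open_line_peval_nonzero[OF assms(1)]])
  let ?P = "\<lambda>t. deval n p (Deriv (\<lambda>_. 0)) (z(i := t))"
  have "((\<lambda>t. deval n p E (z(i := t)) * inverse (?P t) ^ k) has_field_derivative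
     (deval n p (ddiff i E) z * ?P (z i) + (- of_nat k) * (deval n p E (z(i := z i)) *
        deval n p (ddiff i (Deriv (\<lambda>_. 0))) z)) * inverse (?P (z i)) ^ (k + 1)) (at (z i))"
    using assms(3)
    by (intro has_field_derivative_quotient_power has_field_derivative_deval assms(1))
      (simp add: peval_deriv_0)
  then show "((\<lambda>t. deval n p E (z(i := t)) * inverse (peval n p (z(i := t))) ^ k) has_field_derivative
      deval n p (quot_diff i k E) z * inverse (peval n p z) ^ (k + 1)) (at (z i))"
    by (simp add: quot_diff_def unit_index_def peval_deriv_0)
  show "z i \<in> {t. peval n p (z(i := t)) \<noteq> 0}"
    using assms(3) by simp
  show "deval n p E (z(i := t)) * inverse (peval n p (z(i := t))) ^ k = G (z(i := t))"
    if "t \<in> {t. peval n p (z(i := t)) \<noteq> 0}" for t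
    using assms(2) that unfolding quot_rep_def by auto
qed

lemma quot_rep_partial:
  assumes "i < n" "quot_rep n p G E k"
  shows "quot_rep n p (partial i G) (quot_diff i k E) (k + 1)"
  unfolding quot_rep_def partial_def
  using has_field_derivative_quot_rep[OF assms] DERIV_imp_deriv by blast

fun quot_diff_pow :: "nat \<Rightarrow> nat \<Rightarrow> nat \<Rightarrow> dexpr \<Rightarrow> dexpr" where
  "quot_diff_pow i 0 k E = E"
| "quot_diff_pow i (Suc m) k E = quot_diff i (k + m) (quot_diff_pow i m k E)"

lemma quot_rep_partial_pow:
  assumes "i < n" "quot_rep n p G E k"
  shows "quot_rep n p ((partial i ^^ m) G) (quot_diff_pow i m k E) (k + m)"
proof (induction m)
  case 0
  then show ?case using assms(2) by simp
next
  case (Suc m)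
  then show ?case using quot_rep_partial[OF assms(1) Suc] by simp
qed

fun dpow_numer :: "nat \<Rightarrow> nat \<Rightarrow> mindex \<Rightarrow> dexpr" where
  "dpow_numer l 0 b = Const 1"
| "dpow_numer l (Suc j) b = quot_diff_pow j (b j) (l + (\<Sum>i<j. b i)) (dpow_numer l j b)"

definition inv_pow :: "nat \<Rightarrow> cpoly \<Rightarrow> nat \<Rightarrow> (nat \<Rightarrow> complex) \<Rightarrow> complex" where
  "inv_pow n p l = (\<lambda>z. inverse (peval n p z ^ l))"

lemma quot_rep_dpow:
  "j \<le> n \<Longrightarrow> quot_rep n p (dpow j b (inv_pow n p l)) (dpow_numer l j b) (l + (\<Sum>i<j. b i))"
proof (induction j)
  case 0
  then show ?case by (simp add: quot_rep_def inv_pow_def power_inverse)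
next
  case (Suc j)
  then have "j < n" by simp
  from quot_rep_partial_pow[OF this Suc.IH, of "b j"] Suc.prems show ?case
    by (simp add: add.assoc)
qed

lemma unit_index_upd_commute:
  "(unit_index i)(j := Suc (unit_index i j)) = (unit_index j)(i := Suc (unit_index j i))"
  by (auto simp: unit_index_def fun_eq_iff)

lemma deval_quot_diff_commute:
  "deval n p (quot_diff i (Suc k) (quot_diff j k E)) z = deval n p (quot_diff j (Suc k) (quot_diff i k E)) z"
proof -
  have "deval n p (ddiff i (ddiff j E)) z = deval n p (ddiff j (ddiff i E)) z"
    by (rule deval_ddiff_commute)
  moreover have "deval n p (ddiff i (Deriv (unit_index j))) z = deval n p (ddiff j (Deriv (unit_index i))) z"
    using deval_ddiff_commute[of n p i j "Deriv (\<lambda>_. 0)" z] by (simp add: unit_index_eq)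
  ultimately show ?thesis
    by (simp add: quot_diff_def unit_index_eq algebra_simps unit_index_upd_commute)
qed

definition eq_off_zeros :: "nat \<Rightarrow> cpoly \<Rightarrow> ((nat \<Rightarrow> complex) \<Rightarrow> complex) \<Rightarrow> ((nat \<Rightarrow> complex) \<Rightarrow> complex) \<Rightarrow> bool"
  where "eq_off_zeros n p G H \<longleftrightarrow> (\<forall>z. peval n p z \<noteq> 0 \<longrightarrow> G z = H z)"

lemma partial_commute:
  assumes "i < n" "j < n" "quot_rep n p G E k"
  shows "eq_off_zeros n p (partial i (partial j G)) (partial j (partial i G))"
  using quot_rep_partial[OF assms(1) quot_rep_partial[OF assms(2,3)]]
    quot_rep_partial[OF assms(2) quot_rep_partial[OF assms(1,3)]]
  unfolding eq_off_zeros_def quot_rep_def by (simp add: deval_quot_diff_commute)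

text \<open>Partial derivatives only see a function near points off the zero set, which is open.\<close>
lemma partial_cong:
  assumes "i < n" "eq_off_zeros n p G H"
  shows "eq_off_zeros n p (partial i G) (partial i H)"
  unfolding eq_off_zeros_def partial_def
proof (intro allI impI deriv_cong_ev)
  fix z assume "peval n p z \<noteq> 0"
  then show "\<forall>\<^sub>F t in nhds (z i). G (z(i := t)) = H (z(i := t))"
    unfolding eventually_nhds
    using open_line_peval_nonzero[OF assms(1)] assms(2)
    by (intro exI[of _ "{t. peval n p (z(i := t)) \<noteq> 0}"]) (auto simp: eq_off_zeros_def)
qed simp

lemma funpow_partial_cong:
  assumes "i < n" "eq_off_zeros n p G H"
  shows "eq_off_zeros n p ((partial i ^^ m) G) ((partial i ^^ m) H)"
  by (induction m) (auto intro: partial_cong[OF assms(1)] simp: assms(2))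

lemma partial_funpow_commute:
  assumes "i < n" "j < n" "quot_rep n p G E k"
  shows "eq_off_zeros n p (partial i ((partial j ^^ m) G)) ((partial j ^^ m) (partial i G))"
proof (induction m)
  case 0
  then show ?case by (simp add: eq_off_zeros_def)
next
  case (Suc m)
  have "eq_off_zeros n p (partial i (partial j ((partial j ^^ m) G))) (partial j (partial i ((partial j ^^ m) G)))"
    by (rule partial_commute[OF assms(1,2) quot_rep_partial_pow[OF assms(2,3)]])
  moreover have "eq_off_zeros n p (partial j (partial i ((partial j ^^ m) G))) (partial j ((partial j ^^ m) (partial i G)))"
    by (rule partial_cong[OF assms(2) Suc])
  ultimately show ?case by (simp add: eq_off_zeros_def)
qed

lemma dpow_cong: "(\<And>i. i < j \<Longrightarrow> b i = b' i) \<Longrightarrow> dpow j b g = dpow j b' g"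
  by (induction j) auto

text \<open>\<open>dpow\<close> applies \<open>d_i\<close> before every \<open>d_j\<close> with \<open>j > i\<close>, so raising \<open>b i\<close> by one means
  commuting an extra \<open>d_i\<close> past all of these.\<close>
lemma dpow_upd_eq_partial:
  assumes "i < j" "j \<le> n"
  shows "eq_off_zeros n p (dpow j (b(i := b i + 1)) (inv_pow n p l)) (partial i (dpow j b (inv_pow n p l)))"
  using assms
proof (induction j)
  case (Suc j)
  show ?case
  proof (cases "j = i")
    case True
    have "dpow i (b(i := b i + 1)) (inv_pow n p l) = dpow i b (inv_pow n p l)"
      by (rule dpow_cong) auto
    then have "dpow (Suc j) (b(i := b i + 1)) (inv_pow n p l) = partial i (dpow (Suc j) b (inv_pow n p l))"
      unfolding True dpow.simps fun_upd_same by simp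
    then show ?thesis by (simp only: eq_off_zeros_def) simp
  next
    case False
    with Suc.prems have ij: "i < j" "j < n" "i < n" by auto
    have "eq_off_zeros n p ((partial j ^^ b j) (dpow j (b(i := b i + 1)) (inv_pow n p l)))
        ((partial j ^^ b j) (partial i (dpow j b (inv_pow n p l))))"
      by (rule funpow_partial_cong[OF ij(2) Suc.IH]) (use ij in auto)
    moreover have "eq_off_zeros n p (partial i ((partial j ^^ b j) (dpow j b (inv_pow n p l))))
        ((partial j ^^ b j) (partial i (dpow j b (inv_pow n p l))))"
      by (rule partial_funpow_commute[OF ij(3,2) quot_rep_dpow]) (use ij in auto)
    moreover have "dpow (Suc j) (b(i := b i + 1)) (inv_pow n p l) =
        (partial j ^^ b j) (dpow j (b(i := b i + 1)) (inv_pow n p l))"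
      using False by simp
    ultimately show ?thesis
      unfolding eq_off_zeros_def dpow.simps(2)[of j b] by metis
  qed
qed simp

lemma has_field_derivative_dpow_inv_pow:
  assumes "i < n" "peval n p z \<noteq> 0"
  shows "((\<lambda>t. dpow n b (inv_pow n p l) (z(i := t))) has_field_derivative
           dpow n (b(i := b i + 1)) (inv_pow n p l) z) (at (z i))"
proof -
  note D = has_field_derivative_quot_rep[OF assms(1) quot_rep_dpow[OF order_refl] assms(2), of b l]
  then have "partial i (dpow n b (inv_pow n p l)) z = dpow n (b(i := b i + 1)) (inv_pow n p l) z"
    using dpow_upd_eq_partial[OF assms(1) order_refl, of p b l] assms(2)
    unfolding eq_off_zeros_def by simp
  with D show ?thesis
    unfolding partial_def using DERIV_imp_deriv by metis
qed

section \<open>The action of the Weyl algebra\<close>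

definition shift_x :: "nat \<Rightarrow> mindex \<times> mindex \<Rightarrow> mindex \<times> mindex" where
  "shift_x i = (\<lambda>(a, b). (a(i := a i + 1), b))"

definition shift_d :: "nat \<Rightarrow> mindex \<times> mindex \<Rightarrow> mindex \<times> mindex" where
  "shift_d i = (\<lambda>(a, b). (a, b(i := b i + 1)))"

definition unshift_x :: "nat \<Rightarrow> mindex \<times> mindex \<Rightarrow> mindex \<times> mindex" where
  "unshift_x i = (\<lambda>(a, b). (a(i := a i - 1), b))"

lemma inj_shift_x: "inj (shift_x i)"
  unfolding shift_x_def inj_def by (auto simp: fun_eq_iff split: if_splits)

lemma inj_shift_d: "inj (shift_d i)"
  unfolding shift_d_def inj_def by (auto simp: fun_eq_iff split: if_splits)

lemma inj_on_unshift_x: "inj_on (unshift_x i) {m. fst m i \<ge> 1}"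
  unfolding unshift_x_def inj_on_def by (auto simp: fun_eq_iff split: if_splits)

lemma sum_support_reindex:
  fixes P Q :: "'a \<Rightarrow> complex" and \<phi> :: "'a \<Rightarrow> 'a"
  assumes fin: "finite {m. P m \<noteq> 0}" and inj: "inj_on \<phi> A"
    and on_image: "\<And>m. m \<in> A \<Longrightarrow> Q (\<phi> m) = c m * P m"
    and off_image: "\<And>m. m \<notin> \<phi> ` A \<Longrightarrow> Q m = 0"
    and off_domain: "\<And>m. m \<notin> A \<Longrightarrow> c m * P m = 0"
  shows "finite {m. Q m \<noteq> 0}"
    and "(\<Sum>m\<in>{m. Q m \<noteq> 0}. Q m * T m) = (\<Sum>m\<in>{m. P m \<noteq> 0}. c m * P m * T (\<phi> m))"
proof -
  let ?A = "A \<inter> {m. P m \<noteq> 0}"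
  have sub: "{m. Q m \<noteq> 0} \<subseteq> \<phi> ` ?A"
    using on_image off_image by fastforce
  have finA: "finite ?A" using fin by simp
  then show "finite {m. Q m \<noteq> 0}" using sub finite_subset by blast
  have "(\<Sum>m\<in>{m. Q m \<noteq> 0}. Q m * T m) = (\<Sum>m\<in>\<phi> ` ?A. Q m * T m)"
    by (rule sum.mono_neutral_left) (use finA sub in auto)
  also have "\<dots> = (\<Sum>m\<in>?A. Q (\<phi> m) * T (\<phi> m))"
    by (rule sum.reindex[OF inj_on_subset[OF inj], unfolded comp_def]) auto
  also have "\<dots> = (\<Sum>m\<in>?A. c m * P m * T (\<phi> m))"
    using on_image by simp
  also have "\<dots> = (\<Sum>m\<in>{m. P m \<noteq> 0}. c m * P m * T (\<phi> m))"
    by (rule sum.mono_neutral_left) (use fin off_domain in auto)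
  finally show "(\<Sum>m\<in>{m. Q m \<noteq> 0}. Q m * T m) = (\<Sum>m\<in>{m. P m \<noteq> 0}. c m * P m * T (\<phi> m))" .
qed

definition lmul_d_raise :: "nat \<Rightarrow> weyl \<Rightarrow> weyl" where
  "lmul_d_raise i P = (\<lambda>(a, b). if b i \<ge> 1 then P (a, b(i := b i - 1)) else 0)"

definition lmul_d_lower :: "nat \<Rightarrow> weyl \<Rightarrow> weyl" where
  "lmul_d_lower i P = (\<lambda>(a, b). of_nat (a i + 1) * P (a(i := a i + 1), b))"

lemma lmul_d_eq: "lmul_d i P m = lmul_d_raise i P m + lmul_d_lower i P m"
  by (cases m) (simp add: lmul_d_def lmul_d_raise_def lmul_d_lower_def)

lemma lmul_x_support_sum:
  assumes "finite {m. P m \<noteq> 0}"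
  shows "finite {m. lmul_x i P m \<noteq> 0}"
    and "(\<Sum>m\<in>{m. lmul_x i P m \<noteq> 0}. lmul_x i P m * T m) = (\<Sum>m\<in>{m. P m \<noteq> 0}. 1 * P m * T (shift_x i m))"
proof -
  have on_image: "lmul_x i P (shift_x i m) = 1 * P m" for m
    by (cases m) (simp add: lmul_x_def shift_x_def)
  have off_image: "lmul_x i P m = 0" if "m \<notin> range (shift_x i)" for m
  proof (cases m)
    case (Pair a b)
    have "a i = 0"
    proof (rule ccontr)
      assume "a i \<noteq> 0"
      then have "m = shift_x i (a(i := a i - 1), b)" using Pair by (simp add: shift_x_def)
      then show False using that by blast
    qed
    then show ?thesis using Pair by (simp add: lmul_x_def)
  qed
  note reindex = sum_support_reindex[OF assms inj_shift_x on_image off_image]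
  show "finite {m. lmul_x i P m \<noteq> 0}" by (rule reindex(1)) auto
  show "(\<Sum>m\<in>{m. lmul_x i P m \<noteq> 0}. lmul_x i P m * T m) = (\<Sum>m\<in>{m. P m \<noteq> 0}. 1 * P m * T (shift_x i m))"
    by (rule reindex(2)) auto
qed

lemma lmul_d_raise_support_sum:
  assumes "finite {m. P m \<noteq> 0}"
  shows "finite {m. lmul_d_raise i P m \<noteq> 0}"
    and "(\<Sum>m\<in>{m. lmul_d_raise i P m \<noteq> 0}. lmul_d_raise i P m * T m) =
           (\<Sum>m\<in>{m. P m \<noteq> 0}. 1 * P m * T (shift_d i m))"
proof -
  have on_image: "lmul_d_raise i P (shift_d i m) = 1 * P m" for m
    by (cases m) (simp add: lmul_d_raise_def shift_d_def)
  have off_image: "lmul_d_raise i P m = 0" if "m \<notin> range (shift_d i)" for m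
  proof (cases m)
    case (Pair a b)
    have "b i = 0"
    proof (rule ccontr)
      assume "b i \<noteq> 0"
      then have "m = shift_d i (a, b(i := b i - 1))" using Pair by (simp add: shift_d_def)
      then show False using that by blast
    qed
    then show ?thesis using Pair by (simp add: lmul_d_raise_def)
  qed
  note reindex = sum_support_reindex[OF assms inj_shift_d on_image off_image]
  show "finite {m. lmul_d_raise i P m \<noteq> 0}" by (rule reindex(1)) auto
  show "(\<Sum>m\<in>{m. lmul_d_raise i P m \<noteq> 0}. lmul_d_raise i P m * T m) =
      (\<Sum>m\<in>{m. P m \<noteq> 0}. 1 * P m * T (shift_d i m))"
    by (rule reindex(2)) auto
qed

lemma lmul_d_lower_support_sum:
  assumes "finite {m. P m \<noteq> 0}"
  shows "finite {m. lmul_d_lower i P m \<noteq> 0}"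
    and "(\<Sum>m\<in>{m. lmul_d_lower i P m \<noteq> 0}. lmul_d_lower i P m * T m) =
           (\<Sum>m\<in>{m. P m \<noteq> 0}. of_nat (fst m i) * P m * T (unshift_x i m))"
proof -
  have on_image: "lmul_d_lower i P (unshift_x i m) = of_nat (fst m i) * P m" if "m \<in> {m. fst m i \<ge> 1}" for m
    using that by (cases m) (simp add: lmul_d_lower_def unshift_x_def)
  have off_image: "lmul_d_lower i P m = 0" if "m \<notin> unshift_x i ` {m. fst m i \<ge> 1}" for m
  proof (cases m)
    case (Pair a b)
    have "m = unshift_x i (a(i := a i + 1), b)" using Pair by (simp add: unshift_x_def)
    then have "P (a(i := a i + 1), b) = 0" using that by force
    then show ?thesis using Pair by (simp add: lmul_d_lower_def)
  qed
  have off_domain: "of_nat (fst m i) * P m = 0" if "m \<notin> {m. fst m i \<ge> 1}" for m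
    using that by simp
  note reindex = sum_support_reindex[OF assms inj_on_unshift_x on_image off_image off_domain]
  show "finite {m. lmul_d_lower i P m \<noteq> 0}" by (rule reindex(1))
  show "(\<Sum>m\<in>{m. lmul_d_lower i P m \<noteq> 0}. lmul_d_lower i P m * T m) =
      (\<Sum>m\<in>{m. P m \<noteq> 0}. of_nat (fst m i) * P m * T (unshift_x i m))"
    by (rule reindex(2))
qed

lemma is_weyl_add:
  assumes "is_weyl n P" "is_weyl n Q"
  shows "is_weyl n (\<lambda>m. P m + Q m)"
proof -
  have "finite {m. P m + Q m \<noteq> 0}"
    by (rule finite_subset[of _ "{m. P m \<noteq> 0} \<union> {m. Q m \<noteq> 0}"])
      (use assms in \<open>auto simp: is_weyl_def\<close>)
  moreover have "a j = 0 \<and> b j = 0" if "P (a, b) + Q (a, b) \<noteq> 0" "n \<le> j" for a b j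
  proof -
    have "P (a, b) \<noteq> 0 \<or> Q (a, b) \<noteq> 0" using that(1) by auto
    then show ?thesis using assms that(2) unfolding is_weyl_def by blast
  qed
  ultimately show ?thesis unfolding is_weyl_def by blast
qed

lemma is_weyl_smul: "is_weyl n P \<Longrightarrow> is_weyl n (\<lambda>m. c * P m)"
  unfolding is_weyl_def by (auto intro: finite_subset[of _ "{m. P m \<noteq> 0}"])

lemma is_weyl_lmul_x:
  assumes "is_weyl n P" "i < n"
  shows "is_weyl n (lmul_x i P)"
proof -
  have "finite {m. lmul_x i P m \<noteq> 0}"
    using lmul_x_support_sum(1) assms(1) by (simp add: is_weyl_def)
  moreover have "a j = 0 \<and> b j = 0" if "lmul_x i P (a, b) \<noteq> 0" "n \<le> j" for a b j
  proof -
    have "P (a(i := a i - 1), b) \<noteq> 0"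
      using that(1) by (auto simp: lmul_x_def split: if_splits)
    then have "(a(i := a i - 1)) j = 0 \<and> b j = 0"
      using assms(1) that(2) unfolding is_weyl_def by blast
    then show ?thesis using assms(2) that(2) by auto
  qed
  ultimately show ?thesis unfolding is_weyl_def by blast
qed

lemma is_weyl_lmul_d:
  assumes "is_weyl n P" "i < n"
  shows "is_weyl n (lmul_d i P)"
proof -
  have "{m. lmul_d i P m \<noteq> 0} \<subseteq> {m. lmul_d_raise i P m \<noteq> 0} \<union> {m. lmul_d_lower i P m \<noteq> 0}"
    by (auto simp: lmul_d_eq)
  then have "finite {m. lmul_d i P m \<noteq> 0}"
    using lmul_d_raise_support_sum(1) lmul_d_lower_support_sum(1) assms(1) finite_subset
    unfolding is_weyl_def by blast
  moreover have "a j = 0 \<and> b j = 0" if "lmul_d i P (a, b) \<noteq> 0" "n \<le> j" for a b j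
  proof -
    have "P (a, b(i := b i - 1)) \<noteq> 0 \<or> P (a(i := a i + 1), b) \<noteq> 0"
      using that(1) by (auto simp: lmul_d_def split: if_splits)
    then have "a j = 0 \<and> (b(i := b i - 1)) j = 0 \<or> (a(i := a i + 1)) j = 0 \<and> b j = 0"
      using assms(1) that(2) unfolding is_weyl_def by blast
    then show ?thesis using assms(2) that(2) by (auto split: if_splits)
  qed
  ultimately show ?thesis unfolding is_weyl_def by blast
qed

lemma act_superset:
  assumes "finite S" "{m. P m \<noteq> 0} \<subseteq> S"
  shows "act n P g z = (\<Sum>m\<in>S. P m * mono n (fst m) z * dpow n (snd m) g z)"
  unfolding act_def by (rule sum.mono_neutral_left) (use assms in auto)

lemma act_eq: "act n P g z = (\<Sum>m\<in>{m. P m \<noteq> 0}. P m * (mono n (fst m) z * dpow n (snd m) g z))"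
  by (simp add: act_def mult.assoc)

lemma act_add:
  assumes "is_weyl n P" "is_weyl n Q"
  shows "act n (\<lambda>m. P m + Q m) g z = act n P g z + act n Q g z"
proof -
  let ?S = "{m. P m \<noteq> 0} \<union> {m. Q m \<noteq> 0}"
  have fin: "finite ?S" using assms by (simp add: is_weyl_def)
  have "act n (\<lambda>m. P m + Q m) g z = (\<Sum>m\<in>?S. (P m + Q m) * mono n (fst m) z * dpow n (snd m) g z)"
    by (rule act_superset[OF fin]) auto
  also have "\<dots> = (\<Sum>m\<in>?S. P m * mono n (fst m) z * dpow n (snd m) g z) +
      (\<Sum>m\<in>?S. Q m * mono n (fst m) z * dpow n (snd m) g z)"
    by (simp add: algebra_simps sum.distrib)
  also have "\<dots> = act n P g z + act n Q g z"
    by (simp add: act_superset[OF fin])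
  finally show ?thesis .
qed

lemma act_smul:
  assumes "is_weyl n P"
  shows "act n (\<lambda>m. c * P m) g z = c * act n P g z"
proof -
  have fin: "finite {m. P m \<noteq> 0}" using assms by (simp add: is_weyl_def)
  have "act n (\<lambda>m. c * P m) g z = (\<Sum>m\<in>{m. P m \<noteq> 0}. (c * P m) * mono n (fst m) z * dpow n (snd m) g z)"
    by (rule act_superset[OF fin]) auto
  then show ?thesis
    by (simp add: act_def sum_distrib_left algebra_simps)
qed

lemma mono_upd_Suc:
  assumes "i < n"
  shows "mono n (a(i := Suc (a i))) z = z i * mono n a z"
proof -
  have "(\<Prod>j\<in>{..<n}-{i}. z j ^ (a(i := Suc (a i))) j) = (\<Prod>j\<in>{..<n}-{i}. z j ^ a j)"
    by (rule prod.cong) auto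
  with assms show ?thesis
    unfolding mono_def by (simp add: prod.remove[of "{..<n}" i])
qed

lemma has_field_derivative_mono:
  assumes "i < n"
  shows "((\<lambda>t. mono n a (z(i := t))) has_field_derivative
           of_nat (a i) * mono n (a(i := a i - 1)) z) (at (z i))"
proof -
  define R where "R = (\<Prod>j\<in>{..<n}-{i}. z j ^ a j)"
  have "(\<Prod>j\<in>{..<n}-{i}. (z(i := t)) j ^ a j) = R" for t
    unfolding R_def by (rule prod.cong) auto
  then have mono_line: "mono n a (z(i := t)) = t ^ a i * R" for t
    using assms unfolding mono_def by (simp add: prod.remove[of "{..<n}" i])
  have "(\<Prod>j\<in>{..<n}-{i}. z j ^ (a(i := a i - 1)) j) = R"
    unfolding R_def by (rule prod.cong) auto
  then have mono_lowered: "mono n (a(i := a i - 1)) z = z i ^ (a i - 1) * R"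
    using assms unfolding mono_def by (simp add: prod.remove[of "{..<n}" i])
  have "((\<lambda>t. t ^ a i) has_field_derivative of_nat (a i) * (1 * z i ^ (a i - Suc 0))) (at (z i))"
    by (rule DERIV_power[OF DERIV_ident])
  from DERIV_cmult_right[OF this, of R] show ?thesis
    unfolding mono_line mono_lowered by (simp add: mult.assoc)
qed

lemma act_lmul_x:
  assumes "is_weyl n P" "i < n"
  shows "act n (lmul_x i P) g z = z i * act n P g z"
proof -
  have fin: "finite {m. P m \<noteq> 0}" using assms by (simp add: is_weyl_def)
  have "act n (lmul_x i P) g z =
      (\<Sum>m\<in>{m. P m \<noteq> 0}. 1 * P m * (mono n (fst (shift_x i m)) z * dpow n (snd (shift_x i m)) g z))"
    unfolding act_eq by (rule lmul_x_support_sum(2)[OF fin])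
  also have "\<dots> = (\<Sum>m\<in>{m. P m \<noteq> 0}. z i * (P m * (mono n (fst m) z * dpow n (snd m) g z)))"
    by (rule sum.cong) (auto simp: shift_x_def mono_upd_Suc[OF assms(2)] split: prod.splits)
  also have "\<dots> = z i * act n P g z" by (simp add: act_eq sum_distrib_left)
  finally show ?thesis .
qed

lemma act_lmul_d:
  assumes "is_weyl n P"
  shows "act n (lmul_d i P) g z =
    (\<Sum>m\<in>{m. P m \<noteq> 0}. P m * (mono n (fst m) z * dpow n ((snd m)(i := snd m i + 1)) g z
       + of_nat (fst m i) * mono n ((fst m)(i := fst m i - 1)) z * dpow n (snd m) g z))"
proof -
  have fin: "finite {m. P m \<noteq> 0}" using assms by (simp add: is_weyl_def)
  let ?T = "\<lambda>m. mono n (fst m) z * dpow n (snd m) g z"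
  let ?R = "lmul_d_raise i P" and ?L = "lmul_d_lower i P"
  let ?S = "{m. ?R m \<noteq> 0} \<union> {m. ?L m \<noteq> 0}"
  have finS: "finite ?S"
    using lmul_d_raise_support_sum(1)[OF fin] lmul_d_lower_support_sum(1)[OF fin] by simp
  have "act n (lmul_d i P) g z = (\<Sum>m\<in>?S. ?R m * ?T m) + (\<Sum>m\<in>?S. ?L m * ?T m)"
    by (subst act_superset[OF finS]) (auto simp: lmul_d_eq algebra_simps sum.distrib)
  also have "\<dots> = (\<Sum>m\<in>{m. ?R m \<noteq> 0}. ?R m * ?T m) + (\<Sum>m\<in>{m. ?L m \<noteq> 0}. ?L m * ?T m)"
    by (intro arg_cong2[where f = "(+)"] sum.mono_neutral_right[OF finS]) auto
  also have "\<dots> = (\<Sum>m\<in>{m. P m \<noteq> 0}. 1 * P m * ?T (shift_d i m)) +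
      (\<Sum>m\<in>{m. P m \<noteq> 0}. of_nat (fst m i) * P m * ?T (unshift_x i m))"
    unfolding lmul_d_raise_support_sum(2)[OF fin] lmul_d_lower_support_sum(2)[OF fin] ..
  also have "\<dots> = (\<Sum>m\<in>{m. P m \<noteq> 0}. P m * (mono n (fst m) z * dpow n ((snd m)(i := snd m i + 1)) g z
       + of_nat (fst m i) * mono n ((fst m)(i := fst m i - 1)) z * dpow n (snd m) g z))"
    unfolding sum.distrib[symmetric]
    by (rule sum.cong[OF refl]) (auto simp: algebra_simps shift_d_def unshift_x_def split: prod.splits)
  finally show ?thesis .
qed

lemma Ann_inv_pow_iff:
  "P \<in> Ann_inv_pow n p l \<longleftrightarrow> is_weyl n P \<and> (\<forall>z. peval n p z \<noteq> 0 \<longrightarrow> act n P (inv_pow n p l) z = 0)"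
  by (simp add: Ann_inv_pow_def inv_pow_def)

text \<open>Along the \<open>i\<close>-th coordinate line, \<open>P \<bullet> (1/p^l)\<close> vanishes on an open set, so its derivative,
  which by the Leibniz rule is \<open>(d_i P) \<bullet> (1/p^l)\<close>, vanishes as well.\<close>
lemma Ann_inv_pow_lmul_d:
  assumes P: "P \<in> Ann_inv_pow n p l" and i: "i < n"
  shows "lmul_d i P \<in> Ann_inv_pow n p l"
  unfolding Ann_inv_pow_iff
proof (intro conjI allI impI)
  have W: "is_weyl n P" using P by (simp add: Ann_inv_pow_iff)
  then show "is_weyl n (lmul_d i P)" using i by (rule is_weyl_lmul_d)
  fix z assume z: "peval n p z \<noteq> 0"
  let ?g = "inv_pow n p l"
  let ?S = "{m. P m \<noteq> 0}"
  define H where "H t = act n P ?g (z(i := t))" for t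
  let ?H' = "\<Sum>m\<in>?S. P m * (of_nat (fst m i) * mono n ((fst m)(i := fst m i - 1)) z * dpow n (snd m) ?g (z(i := z i))
      + dpow n ((snd m)(i := snd m i + 1)) ?g z * mono n (fst m) (z(i := z i)))"
  have "(H has_field_derivative ?H') (at (z i))"
    unfolding H_def act_eq
    by (intro DERIV_sum DERIV_cmult DERIV_mult has_field_derivative_mono[OF i]
        has_field_derivative_dpow_inv_pow[OF i z])
  moreover have "(H has_field_derivative 0) (at (z i))"
  proof (rule has_field_derivative_transform_within_open[OF DERIV_const open_line_peval_nonzero[OF i]])
    show "z i \<in> {t. peval n p (z(i := t)) \<noteq> 0}" using z by simp
    show "0 = H t" if "t \<in> {t. peval n p (z(i := t)) \<noteq> 0}" for t
      using P that by (simp add: H_def Ann_inv_pow_iff)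
  qed
  ultimately have "?H' = 0" by (rule DERIV_unique)
  then show "act n (lmul_d i P) ?g z = 0"
    unfolding act_lmul_d[OF W] fun_upd_triv by (simp add: algebra_simps)
qed

lemma left_ideal_subset_Ann_inv_pow:
  assumes "S \<subseteq> Ann_inv_pow n p l"
  shows "left_ideal n S \<subseteq> Ann_inv_pow n p l"
proof
  fix P assume "P \<in> left_ideal n S"
  then show "P \<in> Ann_inv_pow n p l"
  proof (induction rule: left_ideal.induct)
    case zero
    then show ?case by (simp add: Ann_inv_pow_iff is_weyl_def act_def)
  next
    case (add P Q)
    then show ?case by (simp add: Ann_inv_pow_iff is_weyl_add act_add)
  next
    case (smul P c)
    then show ?case by (simp add: Ann_inv_pow_iff is_weyl_smul act_smul)
  next
    case (lx P i)
    then show ?case by (simp add: Ann_inv_pow_iff is_weyl_lmul_x act_lmul_x)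
  next
    case (ld P i)
    then show ?case using Ann_inv_pow_lmul_d by blast
  qed (use assms in blast)
qed

section \<open>Weighted scaling\<close>

lemma ipr_emb_upd_Suc:
  assumes "i < n"
  shows "ipr n (emb (c(i := Suc (c i)))) w = ipr n (emb c) w + w i"
proof -
  have "ipr n (emb (c(i := Suc (c i)))) w = (\<Sum>j<n. emb c j * w j + (if j = i then w i else 0))"
    unfolding ipr_def by (rule sum.cong) (auto simp: emb_def algebra_simps)
  with assms show ?thesis by (simp add: sum.distrib ipr_def)
qed

lemma ipr_emb_0: "ipr n (emb (\<lambda>_. 0)) w = 0"
  by (simp add: ipr_def emb_def)

lemma ipr_emb_unit_index: "i < n \<Longrightarrow> ipr n (emb (unit_index i)) w = w i"
  using ipr_emb_upd_Suc[of i n "\<lambda>_. 0" w] by (simp add: ipr_emb_0 unit_index_eq)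

text \<open>Weight bookkeeping for the scaling \<open>z \<mapsto> t^w z\<close>: the coordinate \<open>x_i\<close> gets weight \<open>w_i\<close>
  and \<open>d^c p\<close> gets weight \<open>d - <c,w>\<close>, where \<open>d\<close> will be \<open>ord_f(w)\<close>. An expression of weight \<open>a\<close>
  evaluated at \<open>t^w z\<close> on \<open>f\<close> is then asymptotic to \<open>t^a\<close> times its value at \<open>z\<close> on \<open>f_tau\<close>
  (\<open>tendsto_wscale_deval\<close>). Zero constants may be given any weight.\<close>
inductive has_lead_order :: "nat \<Rightarrow> (nat \<Rightarrow> real) \<Rightarrow> real \<Rightarrow> dexpr \<Rightarrow> real \<Rightarrow> bool"
  for n w d where
  Const: "c = 0 \<or> a = 0 \<Longrightarrow> has_lead_order n w d (Const c) a"
| Coord: "a = w i \<Longrightarrow> has_lead_order n w d (Coord i) a"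
| Deriv: "a = d - ipr n (emb c) w \<Longrightarrow> has_lead_order n w d (Deriv c) a"
| Add: "has_lead_order n w d A a \<Longrightarrow> has_lead_order n w d B a \<Longrightarrow> has_lead_order n w d (Add A B) a"
| Mul: "has_lead_order n w d A a \<Longrightarrow> has_lead_order n w d B b \<Longrightarrow> c = a + b \<Longrightarrow>
    has_lead_order n w d (Mul A B) c"

lemma has_lead_order_ddiff:
  assumes "has_lead_order n w d E a" "i < n"
  shows "has_lead_order n w d (ddiff i E) (a - w i)"
  using assms(1)
proof (induction rule: has_lead_order.induct)
  case (Deriv a c)
  then show ?case by (auto intro!: has_lead_order.Deriv simp: ipr_emb_upd_Suc[OF assms(2)])
next
  case (Mul A a B b c)
  then show ?case by (auto intro!: has_lead_order.Add has_lead_order.Mul)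
qed (auto intro: has_lead_order.intros)

lemma has_lead_order_quot_diff:
  assumes "has_lead_order n w d E a" "i < n"
  shows "has_lead_order n w d (quot_diff i k E) (a + d - w i)"
  unfolding quot_diff_def
proof (rule has_lead_order.Add)
  show "has_lead_order n w d (Mul (ddiff i E) (Deriv (\<lambda>_. 0))) (a + d - w i)"
    by (rule has_lead_order.Mul[OF has_lead_order_ddiff[OF assms] has_lead_order.Deriv])
      (auto simp: ipr_emb_0)
  show "has_lead_order n w d (Mul (Const (- of_nat k)) (Mul E (Deriv (unit_index i)))) (a + d - w i)"
    by (rule has_lead_order.Mul[OF has_lead_order.Const has_lead_order.Mul[OF assms(1) has_lead_order.Deriv]])
      (auto simp: ipr_emb_unit_index[OF assms(2)])
qed

lemma has_lead_order_quot_diff_pow: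
  assumes "has_lead_order n w d E a" "i < n"
  shows "has_lead_order n w d (quot_diff_pow i m k E) (a + real m * (d - w i))"
proof (induction m)
  case 0
  then show ?case using assms(1) by simp
next
  case (Suc m)
  from has_lead_order_quot_diff[OF Suc assms(2), of "k + m"] show ?case
    by (simp add: algebra_simps)
qed

lemma has_lead_order_dpow_numer:
  "j \<le> n \<Longrightarrow> has_lead_order n w d (dpow_numer l j b) (\<Sum>i<j. real (b i) * (d - w i))"
proof (induction j)
  case 0
  then show ?case by (simp add: has_lead_order.Const)
next
  case (Suc j)
  then have "j < n" by simp
  from has_lead_order_quot_diff_pow[OF Suc.IH this, of "b j" "l + (\<Sum>i<j. b i)"] Suc.prems
  show ?case by (simp add: add.commute)
qed

lemma emb_mem_Newton:
  assumes fin: "finite {g. f g \<noteq> 0}" and g: "f g \<noteq> 0"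
  shows "emb g \<in> Newton f"
  unfolding Newton_def
proof (intro CollectI exI[of _ "\<lambda>g'. if g' = g then 1 else 0"] conjI)
  show "\<forall>g'\<in>{g. f g \<noteq> 0}. 0 \<le> (if g' = g then 1 else (0::real))" by simp
  show "(\<Sum>g'\<in>{g. f g \<noteq> 0}. if g' = g then 1 else (0::real)) = 1"
    using fin g by (simp add: sum.delta')
  have "(\<Sum>g'\<in>{g. f g \<noteq> 0}. (if g' = g then 1 else 0) * emb g' i) = emb g i" for i
  proof -
    have "(\<Sum>g'\<in>{g. f g \<noteq> 0}. (if g' = g then 1 else 0) * emb g' i) =
        (\<Sum>g'\<in>{g. f g \<noteq> 0}. if g' = g then emb g' i else 0)"
      by (rule sum.cong) auto
    then show ?thesis using fin g by (simp add: sum.delta')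
  qed
  then show "emb g = (\<lambda>i. \<Sum>g'\<in>{g. f g \<noteq> 0}. (if g' = g then 1 else 0) * emb g' i)"
    by (simp add: fun_eq_iff)
qed

lemma bdd_below_ipr_Newton:
  assumes fin: "finite {g. f g \<noteq> 0}"
  shows "bdd_below ((\<lambda>u. ipr n u w) ` Newton f)"
proof -
  define B where "B = (\<Sum>g\<in>{g. f g \<noteq> 0}. \<bar>ipr n (emb g) w\<bar>)"
  show ?thesis
  proof (rule bdd_belowI2[of _ "- B"])
    fix u assume "u \<in> Newton f"
    then obtain c where c: "\<forall>g\<in>{g. f g \<noteq> 0}. c g \<ge> 0" "(\<Sum>g\<in>{g. f g \<noteq> 0}. c g) = 1"
      "u = (\<lambda>i. \<Sum>g\<in>{g. f g \<noteq> 0}. c g * emb g i)" unfolding Newton_def by blast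
    have "ipr n u w = (\<Sum>g\<in>{g. f g \<noteq> 0}. c g * ipr n (emb g) w)"
      unfolding ipr_def c(3) sum_distrib_right
      by (subst sum.swap) (simp add: sum_distrib_left mult.assoc)
    also have "\<dots> \<ge> (\<Sum>g\<in>{g. f g \<noteq> 0}. c g * (- B))"
    proof (rule sum_mono)
      fix g assume g: "g \<in> {g. f g \<noteq> 0}"
      have "\<bar>ipr n (emb g) w\<bar> \<le> B" unfolding B_def
        by (rule member_le_sum[OF g _ fin]) simp
      then show "c g * (- B) \<le> c g * ipr n (emb g) w"
        using c(1) g by (intro mult_left_mono) auto
    qed
    also have "(\<Sum>g\<in>{g. f g \<noteq> 0}. c g * (- B)) = - B"
      using c(2) by (simp add: sum_distrib_right[symmetric] sum_negf)
    finally show "- B \<le> ipr n u w" .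
  qed
qed

lemma ordf_le_ipr_emb:
  assumes "finite {g. f g \<noteq> 0}" "f g \<noteq> 0"
  shows "ordf n f w \<le> ipr n (emb g) w"
  unfolding ordf_def
  by (rule cInf_lower[OF imageI[OF emb_mem_Newton[OF assms]] bdd_below_ipr_Newton[OF assms(1)]])

lemma emb_mem_face_iff:
  assumes "finite {g. f g \<noteq> 0}" "f g \<noteq> 0"
  shows "emb g \<in> face n f w \<longleftrightarrow> ipr n (emb g) w = ordf n f w"
  unfolding face_def using emb_mem_Newton[OF assms] by simp

definition wscale :: "(nat \<Rightarrow> real) \<Rightarrow> real \<Rightarrow> (nat \<Rightarrow> complex) \<Rightarrow> nat \<Rightarrow> complex" where
  "wscale w t z = (\<lambda>i. of_real (t powr w i) * z i)"

lemma tendsto_powr_at_right_0: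
  assumes "e \<ge> 0"
  shows "((\<lambda>t. of_real (t powr e) :: complex) \<longlongrightarrow> (if e = 0 then 1 else 0)) (at_right 0)"
proof (cases "e = 0")
  case True
  show ?thesis
    by (rule tendsto_eventually) (use eventually_at_right_less in \<open>eventually_elim, simp add: True\<close>)
next
  case False
  then have "e > 0" using assms by simp
  then have "((\<lambda>t::real. t powr e) \<longlongrightarrow> 0 powr e) (at_right 0)"
    by (intro tendsto_powr2 tendsto_ident_at tendsto_const)
       (use eventually_at_right_less in \<open>eventually_elim, simp\<close>)
  then have "((\<lambda>t::real. of_real (t powr e) :: complex) \<longlongrightarrow> of_real 0) (at_right 0)"
    by (intro tendsto_of_real) simp
  then show ?thesis using False by simp
qed

lemma deriv_monomial_wscale:
  assumes t: "t > 0"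
  shows "(\<Prod>i<n. of_nat (falling_factorial (g i) (c i)) * wscale w t z i ^ (g i - c i)) =
     of_real (t powr (ipr n (emb g) w - ipr n (emb c) w)) *
       (\<Prod>i<n. of_nat (falling_factorial (g i) (c i)) * z i ^ (g i - c i))"
proof (cases "\<forall>i<n. c i \<le> g i")
  case True
  have factor: "of_nat (falling_factorial (g i) (c i)) * wscale w t z i ^ (g i - c i) =
      of_real (t powr (real (g i - c i) * w i)) * (of_nat (falling_factorial (g i) (c i)) * z i ^ (g i - c i))" for i
  proof -
    have "(t powr w i) ^ (g i - c i) = t powr (real (g i - c i) * w i)"
      using t by (simp add: powr_power)
    then show ?thesis
      unfolding wscale_def power_mult_distrib of_real_power[symmetric] by simp
  qed
  have "(\<Sum>i<n. real (g i - c i) * w i) = ipr n (emb g) w - ipr n (emb c) w"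
    unfolding ipr_def emb_def sum_subtractf[symmetric]
    by (rule sum.cong) (use True in \<open>auto simp: of_nat_diff left_diff_distrib\<close>)
  moreover have "(\<Prod>i<n. of_real (t powr (real (g i - c i) * w i)) :: complex) =
      of_real (t powr (\<Sum>i<n. real (g i - c i) * w i))"
    using t by (simp add: powr_sum of_real_prod)
  ultimately show ?thesis
    unfolding factor prod.distrib by simp
next
  case False
  then obtain i where i: "i < n" "g i < c i" by (auto simp: not_le)
  have "(\<Prod>i<n. of_nat (falling_factorial (g i) (c i)) * y i ^ (g i - c i)) = (0::complex)" for y
    by (rule prod_zero) (use i falling_factorial_eq_0 in auto)
  from this[of "wscale w t z"] this[of z] show ?thesis by (simp only:) simp
qed

lemma mono_wscale:
  assumes "t > 0"
  shows "mono n a (wscale w t z) = of_real (t powr ipr n (emb a) w) * mono n a z"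
  using deriv_monomial_wscale[OF assms, where n = n and g = a and c = "\<lambda>_. 0" and w = w and z = z]
  by (simp add: mono_def ipr_emb_0 falling_factorial_def)

text \<open>Each monomial \<open>x^g\<close> of \<open>f\<close> contributes \<open>t^(<g,w> - ord_f(w))\<close> after normalisation, and
  \<open><g,w> \<ge> ord_f(w)\<close> with equality exactly on the face: only \<open>f_tau\<close> survives in the limit.\<close>
lemma tendsto_wscale_peval_deriv:
  assumes fin: "finite {g. f g \<noteq> 0}"
  shows "((\<lambda>t. of_real (t powr (- (ordf n f w - ipr n (emb c) w))) * peval_deriv n c f (wscale w t z))
           \<longlongrightarrow> peval_deriv n c (face_poly f (face n f w)) z) (at_right 0)"
proof -
  define d where "d = ordf n f w"
  define X where "X g = f g * (\<Prod>i<n. of_nat (falling_factorial (g i) (c i)) * z i ^ (g i - c i))" for g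
  define e where "e g = ipr n (emb g) w - d" for g
  have "\<forall>\<^sub>F t in at_right 0. (\<Sum>g\<in>{g. f g \<noteq> 0}. of_real (t powr e g) * X g) =
       of_real (t powr (- (d - ipr n (emb c) w))) * peval_deriv n c f (wscale w t z)"
    using eventually_at_right_less
  proof eventually_elim
    case (elim t)
    have "t powr (- (d - ipr n (emb c) w)) * t powr (ipr n (emb g) w - ipr n (emb c) w) = t powr e g" for g
      unfolding e_def powr_add[symmetric] by (simp add: algebra_simps)
    then have "(of_real (t powr (- (d - ipr n (emb c) w))) :: complex) *
        of_real (t powr (ipr n (emb g) w - ipr n (emb c) w)) = of_real (t powr e g)" for g
      by (simp only: of_real_mult[symmetric])
    then show ?case
      unfolding peval_deriv_def sum_distrib_left deriv_monomial_wscale[OF elim] X_def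
      by (intro sum.cong[OF refl]) (simp add: algebra_simps)
  qed
  moreover have "((\<lambda>t. \<Sum>g\<in>{g. f g \<noteq> 0}. of_real (t powr e g) * X g) \<longlongrightarrow>
      (\<Sum>g\<in>{g. f g \<noteq> 0}. (if e g = 0 then 1 else 0) * X g)) (at_right 0)"
  proof (intro tendsto_sum tendsto_mult tendsto_const)
    fix g assume "g \<in> {g. f g \<noteq> 0}"
    then have "e g \<ge> 0" unfolding e_def d_def using ordf_le_ipr_emb[OF fin] by simp
    then show "((\<lambda>t. of_real (t powr e g) :: complex) \<longlongrightarrow> (if e g = 0 then 1 else 0)) (at_right 0)"
      by (rule tendsto_powr_at_right_0)
  qed
  moreover have "(\<Sum>g\<in>{g. f g \<noteq> 0}. (if e g = 0 then 1 else 0) * X g) = peval_deriv n c (face_poly f (face n f w)) z"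
  proof -
    have "(\<Sum>g\<in>{g. f g \<noteq> 0}. (if e g = 0 then 1 else 0) * X g) =
        (\<Sum>g\<in>{g. f g \<noteq> 0}. face_poly f (face n f w) g *
           (\<Prod>i<n. of_nat (falling_factorial (g i) (c i)) * z i ^ (g i - c i)))"
      by (rule sum.cong[OF refl])
        (use emb_mem_face_iff[OF fin] in \<open>simp add: X_def e_def d_def face_poly_def\<close>)
    also have "\<dots> = peval_deriv n c (face_poly f (face n f w)) z"
      unfolding peval_deriv_def
      by (rule sum.mono_neutral_right) (use fin in \<open>auto simp: face_poly_def split: if_splits\<close>)
    finally show ?thesis .
  qed
  ultimately show ?thesis using tendsto_cong by (fastforce simp: d_def)
qed

lemma tendsto_wscale_deval:
  assumes "finite {g. f g \<noteq> 0}" "has_lead_order n w (ordf n f w) E a"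
  shows "((\<lambda>t. of_real (t powr (- a)) * deval n f E (wscale w t z))
           \<longlongrightarrow> deval n (face_poly f (face n f w)) E z) (at_right 0)"
  using assms(2)
proof (induction rule: has_lead_order.induct)
  case (Const c a)
  then show ?case
  proof
    assume "a = 0"
    show ?thesis
      by (rule tendsto_eventually)
        (use eventually_at_right_less in \<open>eventually_elim, simp add: \<open>a = 0\<close>\<close>)
  qed simp
next
  case (Coord a i)
  have "\<forall>\<^sub>F t in at_right 0. of_real (t powr (- a)) * deval n f (Coord i) (wscale w t z) = z i"
    using eventually_at_right_less
  proof eventually_elim
    case (elim t)
    have "t powr (- a) * t powr a = 1" using elim by (simp add: powr_minus)
    then have "of_real (t powr (- a)) * (of_real (t powr a) * z i) = z i"
      by (metis mult.assoc mult_1 of_real_1 of_real_mult)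
    then show ?case using Coord by (simp add: wscale_def)
  qed
  then show ?case by (simp add: tendsto_eventually)
next
  case (Deriv a c)
  then show ?case using tendsto_wscale_peval_deriv[OF assms(1)] by simp
next
  case (Add A a B)
  then show ?case by (simp add: distrib_left tendsto_add)
next
  case (Mul A a B b c)
  have "\<forall>\<^sub>F t in at_right 0.
      (of_real (t powr (- a)) * deval n f A (wscale w t z)) * (of_real (t powr (- b)) * deval n f B (wscale w t z))
      = of_real (t powr (- c)) * deval n f (Mul A B) (wscale w t z)"
    using eventually_at_right_less
  proof eventually_elim
    case (elim t)
    have "t powr (- c) = t powr (- a) * t powr (- b)" using Mul(3) by (simp add: powr_add[symmetric])
    then show ?case by (simp add: algebra_simps)
  qed
  from tendsto_cong[OF this] tendsto_mult[OF Mul.IH] show ?case by simp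
qed

lemma tendsto_wscale_peval:
  assumes "finite {g. f g \<noteq> 0}"
  shows "((\<lambda>t. of_real (t powr (- ordf n f w)) * peval n f (wscale w t z))
           \<longlongrightarrow> peval n (face_poly f (face n f w)) z) (at_right 0)"
  using tendsto_wscale_peval_deriv[OF assms, of n w "\<lambda>_. 0" z]
  by (simp add: ipr_emb_0 peval_deriv_0)

lemma eventually_peval_wscale_nonzero:
  assumes "finite {g. f g \<noteq> 0}" "peval n (face_poly f (face n f w)) z \<noteq> 0"
  shows "\<forall>\<^sub>F t in at_right 0. peval n f (wscale w t z) \<noteq> 0"
  using tendsto_imp_eventually_ne[OF tendsto_wscale_peval[OF assms(1)] assms(2)]
  by (rule eventually_mono) simp

lemma tendsto_wscale_dpow_inv_pow:
  assumes fin: "finite {g. f g \<noteq> 0}" and qz: "peval n (face_poly f (face n f w)) z \<noteq> 0"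
  shows "((\<lambda>t. of_real (t powr (real l * ordf n f w + ipr n (emb b) w)) * dpow n b (inv_pow n f l) (wscale w t z))
           \<longlongrightarrow> dpow n b (inv_pow n (face_poly f (face n f w)) l) z) (at_right 0)"
proof -
  define q where "q = face_poly f (face n f w)"
  define d where "d = ordf n f w"
  define K where "K = l + (\<Sum>i<n. b i)"
  define a where "a = (\<Sum>i<n. real (b i) * (d - w i))"
  define E where "E = dpow_numer l n b"
  have numer: "((\<lambda>t. of_real (t powr (- a)) * deval n f E (wscale w t z)) \<longlongrightarrow> deval n q E z) (at_right 0)"
    unfolding a_def E_def q_def d_def
    by (rule tendsto_wscale_deval[OF fin has_lead_order_dpow_numer]) simp
  have exponent: "- a + d * real K = real l * d + ipr n (emb b) w"
    by (simp add: a_def K_def ipr_def emb_def algebra_simps sum.distrib sum_subtractf sum_distrib_left)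
  have "\<forall>\<^sub>F t in at_right 0.
      (of_real (t powr (- a)) * deval n f E (wscale w t z)) * inverse (of_real (t powr (- d)) * peval n f (wscale w t z)) ^ K
      = of_real (t powr (real l * d + ipr n (emb b) w)) * dpow n b (inv_pow n f l) (wscale w t z)"
    using eventually_peval_wscale_nonzero[OF fin qz] eventually_at_right_less
  proof eventually_elim
    case (elim t)
    have "inverse (t powr (- d)) ^ K = t powr (d * real K)"
      using elim(2) by (simp add: powr_minus powr_power mult.commute)
    then have "t powr (- a) * inverse (t powr (- d)) ^ K = t powr (real l * d + ipr n (emb b) w)"
      by (simp add: powr_add[symmetric] exponent[symmetric] add.commute)
    then have "(of_real (t powr (- a)) :: complex) * inverse (of_real (t powr (- d))) ^ K =
        of_real (t powr (real l * d + ipr n (emb b) w))"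
      by (metis of_real_inverse of_real_mult of_real_power)
    moreover have "dpow n b (inv_pow n f l) (wscale w t z) = deval n f E (wscale w t z) * inverse (peval n f (wscale w t z)) ^ K"
      using quot_rep_dpow[OF order_refl, where p = f and b = b and l = l] elim(1) unfolding quot_rep_def E_def K_def by blast
    ultimately show ?case
      by (simp add: power_mult_distrib algebra_simps)
  qed
  moreover have "((\<lambda>t. (of_real (t powr (- a)) * deval n f E (wscale w t z)) *
      inverse (of_real (t powr (- d)) * peval n f (wscale w t z)) ^ K) \<longlongrightarrow> deval n q E z * inverse (peval n q z) ^ K) (at_right 0)"
    using qz unfolding q_def d_def
    by (intro tendsto_mult numer[unfolded q_def] tendsto_power tendsto_inverse tendsto_wscale_peval fin)
  moreover have "deval n q E z * inverse (peval n q z) ^ K = dpow n b (inv_pow n q l) z"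
    using quot_rep_dpow[OF order_refl, where p = q and b = b and l = l] qz
    unfolding quot_rep_def E_def K_def q_def by simp
  ultimately show ?thesis
    unfolding q_def d_def using tendsto_cong by fastforce
qed

section \<open>Initial forms\<close>

lemma support_initial_subset: "{m. initial n w P m \<noteq> 0} \<subseteq> {m. P m \<noteq> 0}"
  by (auto simp: initial_def)

lemma is_weyl_initial: "is_weyl n P \<Longrightarrow> is_weyl n (initial n w P)"
  using support_initial_subset[of n w P] unfolding is_weyl_def
  by (blast intro: finite_subset)

lemma wt_Pair: "wt n w (a, b) = ipr n (emb b) w - ipr n (emb a) w"
  unfolding wt_def ipr_def emb_def by (simp add: sum_subtractf[symmetric] algebra_simps)

lemma tendsto_wscale_act_term:
  assumes fin: "finite {g. f g \<noteq> 0}" and qz: "peval n (face_poly f (face n f w)) z \<noteq> 0"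
    and "wt n w (a, b) \<le> M"
  shows "((\<lambda>t. of_real (t powr (real l * ordf n f w + M)) *
             (mono n a (wscale w t z) * dpow n b (inv_pow n f l) (wscale w t z)))
           \<longlongrightarrow> (if wt n w (a, b) = M then mono n a z * dpow n b (inv_pow n (face_poly f (face n f w)) l) z else 0))
         (at_right 0)"
proof -
  let ?e = "M - wt n w (a, b)"
  have ev: "\<forall>\<^sub>F t in at_right 0. of_real (t powr ?e) * mono n a z *
      (of_real (t powr (real l * ordf n f w + ipr n (emb b) w)) * dpow n b (inv_pow n f l) (wscale w t z)) =
      of_real (t powr (real l * ordf n f w + M)) * (mono n a (wscale w t z) * dpow n b (inv_pow n f l) (wscale w t z))"
    using eventually_at_right_less
  proof eventually_elim
    case (elim t)
    have "t powr ?e * t powr (real l * ordf n f w + ipr n (emb b) w) =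
        t powr (real l * ordf n f w + M) * t powr ipr n (emb a) w"
      unfolding powr_add[symmetric] wt_Pair by (simp add: algebra_simps)
    then have "(of_real (t powr ?e) :: complex) * of_real (t powr (real l * ordf n f w + ipr n (emb b) w)) =
        of_real (t powr (real l * ordf n f w + M)) * of_real (t powr ipr n (emb a) w)"
      by (metis of_real_mult)
    then show ?case
      unfolding mono_wscale[OF elim] by (simp add: algebra_simps)
  qed
  moreover have "((\<lambda>t. of_real (t powr ?e) * mono n a z *
      (of_real (t powr (real l * ordf n f w + ipr n (emb b) w)) * dpow n b (inv_pow n f l) (wscale w t z)))
      \<longlongrightarrow> (if ?e = 0 then 1 else 0) * mono n a z * dpow n b (inv_pow n (face_poly f (face n f w)) l) z) (at_right 0)"
    using assms(3)
    by (intro tendsto_mult tendsto_const tendsto_powr_at_right_0 tendsto_wscale_dpow_inv_pow fin qz) simp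
  moreover have "(if ?e = 0 then 1 else 0) * mono n a z * dpow n b (inv_pow n (face_poly f (face n f w)) l) z =
      (if wt n w (a, b) = M then mono n a z * dpow n b (inv_pow n (face_poly f (face n f w)) l) z else 0)"
    by simp
  ultimately show ?thesis
    using tendsto_cong[OF ev] by simp
qed

lemma tendsto_wscale_act:
  assumes fin: "finite {g. f g \<noteq> 0}" and qz: "peval n (face_poly f (face n f w)) z \<noteq> 0"
    and W: "is_weyl n P"
  defines "M \<equiv> Max (wt n w ` {m. P m \<noteq> 0})"
  shows "((\<lambda>t. of_real (t powr (real l * ordf n f w + M)) * act n P (inv_pow n f l) (wscale w t z))
           \<longlongrightarrow> act n (initial n w P) (inv_pow n (face_poly f (face n f w)) l) z) (at_right 0)"
proof -
  let ?q = "face_poly f (face n f w)"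
  define S where "S = {m. P m \<noteq> 0}"
  have finS: "finite S" using W by (simp add: is_weyl_def S_def)
  define T where "T m t = P m * (of_real (t powr (real l * ordf n f w + M)) *
      (mono n (fst m) (wscale w t z) * dpow n (snd m) (inv_pow n f l) (wscale w t z)))" for m t
  have "of_real (t powr (real l * ordf n f w + M)) * act n P (inv_pow n f l) (wscale w t z) = (\<Sum>m\<in>S. T m t)" for t
    unfolding T_def act_eq S_def sum_distrib_left by (rule sum.cong) simp_all
  moreover have "((\<lambda>t. \<Sum>m\<in>S. T m t) \<longlongrightarrow>
      (\<Sum>m\<in>S. initial n w P m * mono n (fst m) z * dpow n (snd m) (inv_pow n ?q l) z)) (at_right 0)"
  proof (intro tendsto_sum)
    fix m assume m: "m \<in> S"
    then have "wt n w (fst m, snd m) \<le> M" unfolding M_def S_def using finS[unfolded S_def] by simp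
    then have "((\<lambda>t. T m t) \<longlongrightarrow> P m * (if wt n w (fst m, snd m) = M
        then mono n (fst m) z * dpow n (snd m) (inv_pow n ?q l) z else 0)) (at_right 0)"
      unfolding T_def by (intro tendsto_mult tendsto_const tendsto_wscale_act_term fin qz)
    moreover have "P m * (if wt n w (fst m, snd m) = M then mono n (fst m) z * dpow n (snd m) (inv_pow n ?q l) z else 0)
        = initial n w P m * mono n (fst m) z * dpow n (snd m) (inv_pow n ?q l) z"
      using m by (simp add: initial_def S_def M_def)
    ultimately show "((\<lambda>t. T m t) \<longlongrightarrow> initial n w P m * mono n (fst m) z * dpow n (snd m) (inv_pow n ?q l) z) (at_right 0)"
      by (simp only:)
  qed
  moreover have "act n (initial n w P) (inv_pow n ?q l) z =
      (\<Sum>m\<in>S. initial n w P m * mono n (fst m) z * dpow n (snd m) (inv_pow n ?q l) z)"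
    unfolding S_def by (rule act_superset[OF finS[unfolded S_def] support_initial_subset])
  ultimately show ?thesis by simp
qed

lemma initial_mem_Ann_inv_pow_face:
  assumes fin: "finite {g. f g \<noteq> 0}" and P: "P \<in> Ann_inv_pow n f l"
  shows "initial n w P \<in> Ann_inv_pow n (face_poly f (face n f w)) l"
  unfolding Ann_inv_pow_iff
proof (intro conjI allI impI)
  have W: "is_weyl n P" using P by (simp add: Ann_inv_pow_iff)
  then show "is_weyl n (initial n w P)" by (rule is_weyl_initial)
  fix z assume qz: "peval n (face_poly f (face n f w)) z \<noteq> 0"
  let ?c = "\<lambda>t. of_real (t powr (real l * ordf n f w + Max (wt n w ` {m. P m \<noteq> 0})))"
  have "\<forall>\<^sub>F t in at_right 0. ?c t * act n P (inv_pow n f l) (wscale w t z) = 0"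
    using eventually_peval_wscale_nonzero[OF fin qz]
    by eventually_elim (use P in \<open>simp add: Ann_inv_pow_iff\<close>)
  then have "((\<lambda>t. ?c t * act n P (inv_pow n f l) (wscale w t z)) \<longlongrightarrow> 0) (at_right 0)"
    by (rule tendsto_eventually)
  from tendsto_unique[OF trivial_limit_at_right_real tendsto_wscale_act[OF fin qz W] this]
  show "act n (initial n w P) (inv_pow n (face_poly f (face n f w)) l) z = 0" .
qed

theorem mainTheorem6:
  fixes n l :: nat and f :: cpoly and w :: "nat \<Rightarrow> real"
  assumes "is_poly n f" and "f \<noteq> (\<lambda>_. 0)" and "\<exists>i<n. w i \<noteq> 0"
  shows "initial_ideal n w (Ann_inv_pow n f l) \<subseteq> Ann_inv_pow n (face_poly f (face n f w)) l"
proof -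
  have "finite {g. f g \<noteq> 0}" using assms(1) by (simp add: is_poly_def)
  then show ?thesis
    unfolding initial_ideal_def
    by (intro left_ideal_subset_Ann_inv_pow) (auto intro: initial_mem_Ann_inv_pow_face)
qed

end
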